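(* Let $G$ be a finite abelian group and let $f$ be an automorphism of the monoid $\mathcal{P}_{0}(G)$. If $H$ is a subgroup of $G$, then $f(H)$ is a subgroup of $G$ as well and $|f(H)|=|H|$.
   Context: For an additively written finite abelian group $G$, $\mathcal{P}_{0}(G)$ is the monoid of all subsets of $G$ containing $0$, with setwise addition $X+Y=\{x+y : x\in X, y\in Y\}$ and identity $\{0\}$. *)

theory Defs
  imports Main
begin

definition P0 :: "'a::ab_group_add set set" where
  "P0 = {X. 0 \<in> X}"

definition setadd :: "'a::ab_group_add set \<Rightarrow> 'a set \<Rightarrow> 'a set" where
  "setadd X Y = {x + y | x y. x \<in> X \<and> y \<in> Y}"

definition P0_automorphism :: "('a::ab_group_add set \<Rightarrow> 'a set) \<Rightarrow> bool" where
  "P0_automorphism f \<longleftrightarrow>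
     bij_betw f P0 P0 \<and>
     (\<forall>X\<in>P0. \<forall>Y\<in>P0. f (setadd X Y) = setadd (f X) (f Y)) \<and>
     f {0} = {0}"

definition add_subgroup :: "'a::ab_group_add set \<Rightarrow> bool" where
  "add_subgroup H \<longleftrightarrow> 0 \<in> H \<and> (\<forall>x\<in>H. \<forall>y\<in>H. x + y \<in> H) \<and> (\<forall>x\<in>H. - x \<in> H)"

end

theory Submission
  imports Defs
begin

text \<open>Over a finite group a set containing 0 is a subgroup iff it is an idempotent
  of \<open>P0\<close>, and monoid automorphisms preserve idempotents. For a subgroup \<open>H\<close>, the
  members of \<open>P0\<close> contained in \<open>H\<close> are exactly the \<open>X \<in> P0\<close> with \<open>X + H = H\<close>; this is a
  condition in monoid terms, so \<open>f\<close> maps them bijectively onto the members of \<open>P0\<close>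
  contained in \<open>f H\<close>. There are \<open>2 ^ (card H - 1)\<close> of them, whence \<open>card (f H) = card H\<close>.\<close>

lemma setadd_P0: "X \<in> P0 \<Longrightarrow> Y \<in> P0 \<Longrightarrow> setadd X Y \<in> P0"
  unfolding P0_def setadd_def by force

lemma setadd_absorb_iff_subset:
  assumes "0 \<in> X" "0 \<in> K" "\<forall>x\<in>K. \<forall>y\<in>K. x + y \<in> K"
  shows "setadd X K = K \<longleftrightarrow> X \<subseteq> K"
proof
  assume absorb: "setadd X K = K"
  show "X \<subseteq> K"
  proof
    fix x assume "x \<in> X"
    then have "x + 0 \<in> setadd X K"
      using \<open>0 \<in> K\<close> unfolding setadd_def by blast
    then show "x \<in> K"
      using absorb by simp
  qed
next
  assume "X \<subseteq> K"
  then have "setadd X K \<subseteq> K"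
    using assms(3) unfolding setadd_def by blast
  moreover have "K \<subseteq> setadd X K"
  proof
    fix k assume "k \<in> K"
    then have "0 + k \<in> setadd X K"
      using \<open>0 \<in> X\<close> unfolding setadd_def by blast
    then show "k \<in> setadd X K"
      by simp
  qed
  ultimately show "setadd X K = K" ..
qed

lemma setadd_idem_iff_add_closed:
  assumes "0 \<in> K"
  shows "setadd K K = K \<longleftrightarrow> (\<forall>x\<in>K. \<forall>y\<in>K. x + y \<in> K)"
proof
  assume "setadd K K = K"
  then show "\<forall>x\<in>K. \<forall>y\<in>K. x + y \<in> K"
    unfolding setadd_def by blast
qed (use assms setadd_absorb_iff_subset in blast)

lemma finite_add_closed_uminus_mem:
  fixes K :: "'a::ab_group_add set"
  assumes "finite K" "\<forall>a\<in>K. \<forall>b\<in>K. a + b \<in> K" "0 \<in> K" "x \<in> K"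
  shows "- x \<in> K"
proof -
  have "(\<lambda>y. y + x) ` K = K"
    using assms by (intro endo_inj_surj) (auto simp: inj_on_def)
  then obtain y where "y \<in> K" "y + x = 0"
    using \<open>0 \<in> K\<close> by (metis imageE)
  then show ?thesis
    by (metis add_eq_0_iff2)
qed

lemma add_subgroup_iff_setadd_idem:
  assumes "finite K" "0 \<in> K"
  shows "add_subgroup K \<longleftrightarrow> setadd K K = K"
  using assms finite_add_closed_uminus_mem setadd_idem_iff_add_closed
  unfolding add_subgroup_def by metis

lemma card_P0_subsets:
  assumes "finite K" "0 \<in> K"
  shows "card {X \<in> P0. X \<subseteq> K} = 2 ^ (card K - 1)"
proof -
  have "{X \<in> P0. X \<subseteq> K} = insert 0 ` Pow (K - {0})"
    unfolding P0_def using assms(2) by (auto intro!: image_eqI[of _ _ "_ - {0}"])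
  moreover have "inj_on (insert 0) (Pow (K - {0}))"
    by (auto simp: inj_on_def)
  ultimately show ?thesis
    using assms by (simp add: card_image card_Pow)
qed

lemma P0_subsets_eq_absorbed:
  assumes "K \<in> P0" "setadd K K = K"
  shows "{X \<in> P0. X \<subseteq> K} = {X \<in> P0. setadd X K = K}"
proof -
  have closed: "\<forall>x\<in>K. \<forall>y\<in>K. x + y \<in> K"
    using assms setadd_idem_iff_add_closed[of K] unfolding P0_def by blast
  show ?thesis
    using setadd_absorb_iff_subset[OF _ _ closed] assms(1) unfolding P0_def
    by (intro Collect_cong) blast
qed

lemma P0_automorphism_in_P0: "P0_automorphism f \<Longrightarrow> X \<in> P0 \<Longrightarrow> f X \<in> P0"
  unfolding P0_automorphism_def bij_betw_def by blast

lemma P0_automorphism_inj_on: "P0_automorphism f \<Longrightarrow> inj_on f P0"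
  unfolding P0_automorphism_def bij_betw_def by blast

lemma P0_automorphism_setadd:
  "P0_automorphism f \<Longrightarrow> X \<in> P0 \<Longrightarrow> Y \<in> P0 \<Longrightarrow> f (setadd X Y) = setadd (f X) (f Y)"
  unfolding P0_automorphism_def by blast

lemma P0_automorphism_setadd_idem:
  "P0_automorphism f \<Longrightarrow> K \<in> P0 \<Longrightarrow> setadd K K = K \<Longrightarrow> setadd (f K) (f K) = f K"
  by (metis P0_automorphism_setadd)

lemma P0_automorphism_image_absorbed:
  assumes f: "P0_automorphism f" and K: "K \<in> P0"
  shows "f ` {X \<in> P0. setadd X K = K} = {Y \<in> P0. setadd Y (f K) = f K}"
proof (intro equalityI subsetI)
  fix Y assume "Y \<in> f ` {X \<in> P0. setadd X K = K}"
  then show "Y \<in> {Y \<in> P0. setadd Y (f K) = f K}"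
    using f K by (auto simp: P0_automorphism_in_P0 P0_automorphism_setadd[symmetric])
next
  fix Y assume Y: "Y \<in> {Y \<in> P0. setadd Y (f K) = f K}"
  then obtain X where X: "X \<in> P0" "Y = f X"
    using f unfolding P0_automorphism_def bij_betw_def by blast
  have "f (setadd X K) = f K"
    using Y X f K by (simp add: P0_automorphism_setadd)
  then have "setadd X K = K"
    using P0_automorphism_inj_on[OF f] X K setadd_P0 by (blast dest: inj_onD)
  then show "Y \<in> f ` {X \<in> P0. setadd X K = K}"
    using X by blast
qed

lemma P0_automorphism_image_P0_subsets:
  assumes f: "P0_automorphism f" and K: "K \<in> P0" "setadd K K = K"
  shows "f ` {X \<in> P0. X \<subseteq> K} = {X \<in> P0. X \<subseteq> f K}"
  using P0_automorphism_image_absorbed[OF f K(1)] P0_subsets_eq_absorbed[OF K]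
    P0_subsets_eq_absorbed[OF P0_automorphism_in_P0[OF f K(1)] P0_automorphism_setadd_idem[OF f K]]
  by simp

lemma P0_automorphism_card_idem:
  fixes f :: "'a::{finite, ab_group_add} set \<Rightarrow> 'a set"
  assumes f: "P0_automorphism f" and K: "K \<in> P0" "setadd K K = K"
  shows "card (f K) = card K"
proof -
  have "inj_on f {X \<in> P0. X \<subseteq> K}"
    using P0_automorphism_inj_on[OF f] by (rule inj_on_subset) blast
  then have "card {X \<in> P0. X \<subseteq> f K} = card {X \<in> P0. X \<subseteq> K}"
    using P0_automorphism_image_P0_subsets[OF f K] card_image by fastforce
  moreover have zero: "0 \<in> K" "0 \<in> f K"
    using K(1) P0_automorphism_in_P0[OF f K(1)] by (simp_all add: P0_def)
  ultimately have "card (f K) - 1 = card K - 1"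
    by (simp add: card_P0_subsets)
  moreover have "card K > 0" "card (f K) > 0"
    using zero by (auto simp: card_gt_0_iff)
  ultimately show ?thesis
    by simp
qed

theorem lemma2p1:
  fixes f :: "'a::{finite, ab_group_add} set \<Rightarrow> 'a set"
    and H :: "'a set"
  assumes "P0_automorphism f"
    and "add_subgroup H"
  shows "add_subgroup (f H) \<and> card (f H) = card H"
proof -
  have H: "H \<in> P0" "setadd H H = H"
    using assms(2) add_subgroup_iff_setadd_idem[of H] by (simp_all add: P0_def add_subgroup_def)
  have "f H \<in> P0"
    using assms(1) H(1) by (rule P0_automorphism_in_P0)
  moreover have "setadd (f H) (f H) = f H"
    using assms(1) H by (rule P0_automorphism_setadd_idem)
  ultimately have "add_subgroup (f H)"
    using add_subgroup_iff_setadd_idem[of "f H"] by (simp add: P0_def)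
  moreover have "card (f H) = card H"
    using assms(1) H by (rule P0_automorphism_card_idem)
  ultimately show ?thesis ..
qed

end
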